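(* Let $\lambda>0$, $t>0$, and $F(z;\lambda):=(1-z)\ln(1-z)+z\ln z+z\ln\lambda$. For any $N\in\mathbb N$, $$\left(\frac{\partial}{\partial z}\cdot\frac{-1}{{\rm i} t\,\frac{\partial F}{\partial z}}\right)^N\big((1-z)^{-1/2}\big)=\frac{(1-z)^{-(2N+1)/2}}{(-{\rm i} t)^N(\partial F/\partial z)^N}\sum_{m,n=0}^N A_{mn}z^{-m}\left(\frac{\partial F}{\partial z}\right)^{-n},$$ where the $A_{mn}$ are dyadic rationals (independent of $z,t,\lambda$) satisfying $|A_{mn}|<(3N)!$ for all $m,n$, $A_{mN}=0$ for all $m<N$, and $A_{NN}=(-1)^N(2N-1)!!$.
   Context: The operator $\big(\frac{\partial}{\partial z}\cdot\frac{-1}{{\rm i} t\,\partial F/\partial z}\big)$ means: multiply by $-1/({\rm i} t\,\partial F/\partial z)$, then differentiate with respect to $z$; its $N$-th power is its $N$-fold composition. Here $\partial F/\partial z=\ln\big(\frac{z\lambda}{1-z}\big)$ and $(2N-1)!!=(2N-1)(2N-3)\cdots3\cdot1$. *)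

theory Defs
  imports "HOL-Analysis.Analysis"
begin

definition F :: "real \<Rightarrow> real \<Rightarrow> real" where
  "F lam z = (1 - z) * ln (1 - z) + z * ln z + z * ln lam"

definition opT :: "real \<Rightarrow> real \<Rightarrow> (real \<Rightarrow> complex) \<Rightarrow> (real \<Rightarrow> complex)" where
  "opT lam t g = (\<lambda>z. vector_derivative
      (\<lambda>w. - g w / (\<i> * complex_of_real t * complex_of_real (deriv (F lam) w))) (at z))"

text \<open>Odd double factorial: oddfact N = (2N-1)!! = (2N-1)(2N-3)...3*1 (empty product for N = 0).\<close>
definition oddfact :: "nat \<Rightarrow> nat" where
  "oddfact N = (\<Prod>k<N. 2 * k + 1)"

definition dyadic :: "real \<Rightarrow> bool" where
  "dyadic x \<longleftrightarrow> (\<exists>(k::int) (e::nat). x = of_int k / 2 ^ e)"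

end

theory Submission
  imports Defs
begin

text \<open>
  Write L = dF lam z for the derivative of F and rho = (1 - z) powr (-1/2). Since
  rho' = rho^3/2, (1/z)' = -1/z^2 and (1/L)' = -1/(L^2 z (1 - z)), dividing a monomial
  rho^(2k+1) z^(-m) L^(-(n+k)) by L and differentiating yields rho^(2k+3) times a combination
  of z^(-m) L^(-(n+k+1)), z^(-m-1) L^(-(n+k+1)) and z^(-m-1) L^(-(n+k+2)); the power of rho
  missing from the derivative of z^(-m) is supplied by 1/z = rho^2 (1/z - 1). So the k-th
  iterate is rho^(2k+1) (SUM m n. A_k(m,n) z^(-m) L^(-(n+k))) / (-i t)^k, where A_k obeys the
  three-term recursion coeffA. The recursion keeps the support in n <= m <= k, introduces one
  factor 1/2 per step, multiplies the diagonal entry by -(2k+1) and enlarges the coefficients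
  by a factor at most 6k + 2, whence |A_N(m,n)| <= (3N)!/3^N.
\<close>

fun coeffA :: "nat \<Rightarrow> nat \<Rightarrow> nat \<Rightarrow> real" where
  "coeffA 0 m n = (if m = 0 \<and> n = 0 then 1 else 0)"
| "coeffA (Suc k) m n = ((2 * real k + 1) / 2 + real m) * coeffA k m n
     + (if m = 0 then 0 else - real (m - 1) * coeffA k (m - 1) n)
     + (if m = 0 \<or> n = 0 then 0 else - (real (n - 1) + real k + 1) * coeffA k (m - 1) (n - 1))"

lemma coeffA_eq_0: "k < m \<or> m < n \<Longrightarrow> coeffA k m n = 0"
proof (induction k arbitrary: m n)
  case 0
  then show ?case by auto
next
  case (Suc k)
  then have "coeffA k m n = 0" "m = 0 \<or> coeffA k (m - 1) n = 0"
    "m = 0 \<or> n = 0 \<or> coeffA k (m - 1) (n - 1) = 0"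
    by (auto intro!: Suc.IH)
  then show ?case by auto
qed

lemma coeffA_diag: "coeffA k k k = (-1) ^ k * real (oddfact k)"
  by (induction k) (simp_all add: coeffA_eq_0 oddfact_def algebra_simps)

lemma coeffA_dyadic: "\<exists>a::int. coeffA k m n = of_int a / 2 ^ k"
proof (induction k arbitrary: m n)
  case 0
  show ?case by (rule exI[of _ "if m = 0 \<and> n = 0 then 1 else 0"]) simp
next
  case (Suc k)
  obtain a b c where
    "coeffA k m n = of_int a / 2 ^ k" "coeffA k (m - 1) n = of_int b / 2 ^ k"
    "coeffA k (m - 1) (n - 1) = of_int c / 2 ^ k"
    using Suc.IH by meson
  then have "coeffA (Suc k) m n = of_int ((2 * int k + 1 + 2 * int m) * a
      + (if m = 0 then 0 else - 2 * int (m - 1) * b)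
      + (if m = 0 \<or> n = 0 then 0 else - 2 * (int (n - 1) + int k + 1) * c)) / 2 ^ Suc k"
    by (cases "m = 0"; cases "n = 0") (simp_all add: field_simps)
  then show ?case ..
qed

lemma abs_coeffA_le: "\<bar>coeffA k m n\<bar> \<le> fact (3 * k) / 3 ^ k"
proof (induction k arbitrary: m n)
  case 0
  show ?case by simp
next
  case (Suc k)
  define B :: real where "B = fact (3 * k) / 3 ^ k"
  have "0 \<le> B" by (simp add: B_def)
  have term_le: "\<bar>c * coeffA k i j\<bar> \<le> C * B"
    if "i \<le> k \<Longrightarrow> j \<le> i \<Longrightarrow> \<bar>c\<bar> \<le> C" "0 \<le> C" for c C i j
  proof (cases "i \<le> k \<and> j \<le> i")
    case True
    then show ?thesis
      unfolding abs_mult B_def using that Suc.IH by (intro mult_mono) auto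
  next
    case False
    then show ?thesis using that \<open>0 \<le> B\<close> coeffA_eq_0[of k i j] by (auto simp: not_le)
  qed
  have "\<bar>((2 * real k + 1) / 2 + real m) * coeffA k m n\<bar> \<le> (2 * real k + 1/2) * B"
    by (rule term_le) (auto simp: field_simps)
  moreover have "\<bar>if m = 0 then 0 else - real (m - 1) * coeffA k (m - 1) n\<bar> \<le> real k * B"
    using \<open>0 \<le> B\<close> by (cases "m = 0") (auto intro!: term_le)
  moreover have "\<bar>if m = 0 \<or> n = 0 then 0 else - (real (n - 1) + real k + 1) * coeffA k (m - 1) (n - 1)\<bar>
      \<le> (2 * real k + 1) * B"
    using \<open>0 \<le> B\<close> by (cases "m = 0 \<or> n = 0") (auto intro!: term_le)
  ultimately have "\<bar>coeffA (Suc k) m n\<bar> \<le> (5 * real k + 3/2) * B"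
    unfolding coeffA.simps by argo
  also have "\<dots> \<le> ((3 * real k + 1) * (3 * real k + 2) * (real k + 1)) * B"
    using \<open>0 \<le> B\<close> by (intro mult_right_mono) (auto simp: algebra_simps)
  also have "\<dots> = fact (3 * Suc k) / 3 ^ Suc k"
    by (simp add: B_def numeral_3_eq_3 field_simps)
  finally show ?case .
qed

lemma sum_atMost_shift_if:
  fixes f :: "nat \<Rightarrow> 'a::comm_monoid_add"
  assumes "f N = 0"
  shows "(\<Sum>m\<le>N. if m = 0 then 0 else f (m - 1)) = (\<Sum>m\<le>N. f m)"
proof (cases N)
  case 0
  then show ?thesis using assms by simp
next
  case (Suc M)
  then have "(\<Sum>m\<le>N. if m = 0 then 0 else f (m - 1)) = (\<Sum>m\<le>M. f m)"
    unfolding Suc sum.atMost_Suc_shift by simp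
  also have "\<dots> = (\<Sum>m\<le>N. f m)"
    using Suc assms by simp
  finally show ?thesis .
qed

lemma sum_atMost_shift_fst:
  fixes g X :: "nat \<Rightarrow> nat \<Rightarrow> 'a::semiring_0"
  assumes "\<And>n. g N n = 0"
  shows "(\<Sum>m\<le>N. \<Sum>n\<le>N. (if m = 0 then 0 else g (m - 1) n) * X m n)
       = (\<Sum>m\<le>N. \<Sum>n\<le>N. g m n * X (Suc m) n)"
proof -
  have "(\<Sum>m\<le>N. \<Sum>n\<le>N. (if m = 0 then 0 else g (m - 1) n) * X m n)
      = (\<Sum>m\<le>N. if m = 0 then 0 else (\<Sum>n\<le>N. g (m - 1) n * X (Suc (m - 1)) n))"
    by (intro sum.cong) auto
  also have "\<dots> = (\<Sum>m\<le>N. \<Sum>n\<le>N. g m n * X (Suc m) n)"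
    using assms by (intro sum_atMost_shift_if) simp
  finally show ?thesis .
qed

lemma sum_atMost_shift_both:
  fixes g X :: "nat \<Rightarrow> nat \<Rightarrow> 'a::semiring_0"
  assumes "\<And>n. g N n = 0" and "\<And>m. g m N = 0"
  shows "(\<Sum>m\<le>N. \<Sum>n\<le>N. (if m = 0 \<or> n = 0 then 0 else g (m - 1) (n - 1)) * X m n)
       = (\<Sum>m\<le>N. \<Sum>n\<le>N. g m n * X (Suc m) (Suc n))"
proof -
  have "(\<Sum>n\<le>N. (if m = 0 \<or> n = 0 then 0 else g (m - 1) (n - 1)) * X m n)
      = (\<Sum>n\<le>N. (if m = 0 then 0 else g (m - 1) n) * X m (Suc n))" for m
  proof -
    have "(\<Sum>n\<le>N. (if m = 0 \<or> n = 0 then 0 else g (m - 1) (n - 1)) * X m n)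
        = (\<Sum>n\<le>N. if n = 0 then 0 else (if m = 0 then 0 else g (m - 1) (n - 1)) * X m (Suc (n - 1)))"
      by (intro sum.cong) auto
    also have "\<dots> = (\<Sum>n\<le>N. (if m = 0 then 0 else g (m - 1) n) * X m (Suc n))"
      using assms(2) by (intro sum_atMost_shift_if) simp
    finally show ?thesis .
  qed
  then show ?thesis
    using sum_atMost_shift_fst[of g N "\<lambda>i j. X i (Suc j)"] assms(1) by simp
qed

lemma sum_coeffA_0: "(\<Sum>m\<le>N. \<Sum>n\<le>N. coeffA 0 m n * X m n) = X 0 0"
proof -
  have "coeffA 0 m n * X m n = (if m = 0 then if n = 0 then X 0 0 else 0 else 0)" for m n
    by simp
  then have "(\<Sum>n\<le>N. coeffA 0 m n * X m n) = (if m = 0 then X 0 0 else 0)" for m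
    by (cases "m = 0") (simp_all only: sum.delta finite_atMost atMost_iff, simp_all)
  then show ?thesis
    by (simp only: sum.delta finite_atMost atMost_iff) simp
qed

lemma sum_coeffA_Suc:
  fixes X :: "nat \<Rightarrow> nat \<Rightarrow> real"
  assumes "k < N"
  shows "(\<Sum>m\<le>N. \<Sum>n\<le>N. coeffA (Suc k) m n * X m n)
       = (\<Sum>m\<le>N. \<Sum>n\<le>N. coeffA k m n * (((2 * real k + 1) / 2 + real m) * X m n
            - real m * X (Suc m) n - (real n + real k + 1) * X (Suc m) (Suc n)))"
proof -
  have "coeffA k N n = 0" "coeffA k m N = 0" for m n
    using assms by (auto intro: coeffA_eq_0)
  then have shift_fst:
    "(\<Sum>m\<le>N. \<Sum>n\<le>N. (if m = 0 then 0 else - real (m - 1) * coeffA k (m - 1) n) * X m n)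
       = (\<Sum>m\<le>N. \<Sum>n\<le>N. - real m * coeffA k m n * X (Suc m) n)"
    and shift_both:
    "(\<Sum>m\<le>N. \<Sum>n\<le>N. (if m = 0 \<or> n = 0 then 0
        else - (real (n - 1) + real k + 1) * coeffA k (m - 1) (n - 1)) * X m n)
       = (\<Sum>m\<le>N. \<Sum>n\<le>N. - (real n + real k + 1) * coeffA k m n * X (Suc m) (Suc n))"
    using sum_atMost_shift_fst[of "\<lambda>m n. - real m * coeffA k m n" N X]
      sum_atMost_shift_both[of "\<lambda>m n. - (real n + real k + 1) * coeffA k m n" N X]
    by simp_all
  have "(\<Sum>m\<le>N. \<Sum>n\<le>N. coeffA (Suc k) m n * X m n)
      = (\<Sum>m\<le>N. \<Sum>n\<le>N. ((2 * real k + 1) / 2 + real m) * coeffA k m n * X m n)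
        + (\<Sum>m\<le>N. \<Sum>n\<le>N. - real m * coeffA k m n * X (Suc m) n)
        + (\<Sum>m\<le>N. \<Sum>n\<le>N. - (real n + real k + 1) * coeffA k m n * X (Suc m) (Suc n))"
    unfolding coeffA.simps distrib_right sum.distrib shift_fst shift_both ..
  also have "\<dots> = (\<Sum>m\<le>N. \<Sum>n\<le>N. coeffA k m n * (((2 * real k + 1) / 2 + real m) * X m n
            - real m * X (Suc m) n - (real n + real k + 1) * X (Suc m) (Suc n)))"
    unfolding sum.distrib[symmetric] by (intro sum.cong refl) (simp add: algebra_simps)
  finally show ?thesis .
qed

definition dF :: "real \<Rightarrow> real \<Rightarrow> real" where
  "dF lam w = ln w - ln (1 - w) + ln lam"

definition rho :: "real \<Rightarrow> real" where
  "rho w = (1 - w) powr (-1/2)"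

definition inv_monomial :: "real \<Rightarrow> nat \<Rightarrow> nat \<Rightarrow> nat \<Rightarrow> real \<Rightarrow> real" where
  "inv_monomial lam k m n w = inverse w ^ m * inverse (dF lam w) ^ (n + k)"

lemma has_real_derivative_F: "0 < w \<Longrightarrow> w < 1 \<Longrightarrow> (F lam has_real_derivative dF lam w) (at w)"
  unfolding F_def[abs_def] dF_def
  by (rule derivative_eq_intros refl | simp add: field_simps)+

lemma deriv_F: "0 < w \<Longrightarrow> w < 1 \<Longrightarrow> deriv (F lam) w = dF lam w"
  using has_real_derivative_F DERIV_imp_deriv by blast

lemma has_real_derivative_dF:
  "0 < w \<Longrightarrow> w < 1 \<Longrightarrow> (dF lam has_real_derivative 1 / w + 1 / (1 - w)) (at w)"
  unfolding dF_def[abs_def]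
  by (rule derivative_eq_intros refl | simp add: field_simps)+

lemma rho_power: "w < 1 \<Longrightarrow> rho w ^ k = (1 - w) powr (- real k / 2)"
  unfolding rho_def by (subst powr_power) auto

lemma rho_squared: "w < 1 \<Longrightarrow> rho w ^ 2 = inverse (1 - w)"
  by (simp add: rho_power powr_minus)

lemma has_real_derivative_rho:
  assumes "w < 1"
  shows "(rho has_real_derivative rho w ^ 3 / 2) (at w)"
proof -
  have "((\<lambda>x. 1 - x) has_real_derivative -1) (at w)"
    by (rule derivative_eq_intros refl | simp)+
  from DERIV_fun_powr[OF this, of "-1/2"]
  have "(rho has_real_derivative (-1/2) * (1 - w) powr (-1/2 - 1) * (-1)) (at w)"
    unfolding rho_def[abs_def] using assms by simp
  then show ?thesis
    using rho_power[OF assms, of 3] by simp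
qed

lemma has_real_derivative_inverse_dF:
  assumes "0 < w" "w < 1" "dF lam w \<noteq> 0"
  shows "((\<lambda>x. inverse (dF lam x)) has_real_derivative
           - (inverse (dF lam w) ^ 2 * inverse w * rho w ^ 2)) (at w)"
proof -
  have "1 / w + 1 / (1 - w) = inverse w * rho w ^ 2"
    using assms by (simp add: rho_squared field_simps)
  then show ?thesis
    using DERIV_inverse_fun[OF has_real_derivative_dF[OF assms(1,2)] assms(3)]
    by (simp add: power2_eq_square mult_ac)
qed

lemma has_real_derivative_rho_monomial:
  assumes w: "0 < w" "w < 1" "dF lam w \<noteq> 0"
  shows "((\<lambda>x. rho x ^ (2 * k + 1) * inv_monomial lam (Suc k) m n x) has_real_derivative
    rho w ^ (2 * Suc k + 1) * (((2 * real k + 1) / 2 + real m) * inv_monomial lam (Suc k) m n w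
      - real m * inv_monomial lam (Suc k) (Suc m) n w
      - (real n + real k + 1) * inv_monomial lam (Suc k) (Suc m) (Suc n) w)) (at w)"
proof -
  define r u v where "r = rho w" and "u = inverse w" and "v = inverse (dF lam w)"
  have "((\<lambda>x. rho x ^ (2 * k + 1) * (inverse x ^ m * inverse (dF lam x) ^ (n + Suc k)))
    has_real_derivative
      real (2 * k + 1) * (r ^ 3 / 2 * r ^ (2 * k + 1 - Suc 0)) * (u ^ m * v ^ (n + Suc k))
      + (real m * (- (u ^ Suc (Suc 0)) * u ^ (m - Suc 0)) * v ^ (n + Suc k)
        + real (n + Suc k) * (- (v ^ 2 * u * r ^ 2) * v ^ (n + Suc k - Suc 0)) * u ^ m)
        * r ^ (2 * k + 1)) (at w)"
    unfolding r_def u_def v_def using w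
    by (intro DERIV_mult DERIV_power has_real_derivative_rho has_real_derivative_inverse_dF
        DERIV_inverse) auto
  also have "real (2 * k + 1) * (r ^ 3 / 2 * r ^ (2 * k + 1 - Suc 0)) * (u ^ m * v ^ (n + Suc k))
      + (real m * (- (u ^ Suc (Suc 0)) * u ^ (m - Suc 0)) * v ^ (n + Suc k)
        + real (n + Suc k) * (- (v ^ 2 * u * r ^ 2) * v ^ (n + Suc k - Suc 0)) * u ^ m)
        * r ^ (2 * k + 1)
    = r ^ (2 * k + 1) * u ^ m * v ^ (n + Suc k)
      * ((2 * real k + 1) / 2 * r ^ 2 - real m * u - (real n + real k + 1) * u * v * r ^ 2)"
    by (cases m) (simp_all add: power_add power2_eq_square power3_eq_cube field_simps)
  also have "(2 * real k + 1) / 2 * r ^ 2 - real m * u - (real n + real k + 1) * u * v * r ^ 2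
    = r ^ 2 * ((2 * real k + 1) / 2 + real m - real m * u - (real n + real k + 1) * u * v)"
  proof -
    have "r ^ 2 * (u - 1) = u"
      unfolding r_def u_def using w by (simp add: rho_squared field_simps)
    moreover have "r ^ 2 * ((2 * real k + 1) / 2 + real m - real m * u - (real n + real k + 1) * u * v)
      - ((2 * real k + 1) / 2 * r ^ 2 - real m * u - (real n + real k + 1) * u * v * r ^ 2)
      = real m * (u - r ^ 2 * (u - 1))"
      by (simp add: algebra_simps)
    ultimately show ?thesis by simp
  qed
  also have "r ^ (2 * k + 1) * u ^ m * v ^ (n + Suc k)
      * (r ^ 2 * ((2 * real k + 1) / 2 + real m - real m * u - (real n + real k + 1) * u * v))
    = r ^ (2 * Suc k + 1) * (((2 * real k + 1) / 2 + real m) * (u ^ m * v ^ (n + Suc k))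
      - real m * (u ^ Suc m * v ^ (n + Suc k))
      - (real n + real k + 1) * (u ^ Suc m * v ^ (Suc n + Suc k)))"
    by (simp add: power2_eq_square algebra_simps)
  finally show ?thesis
    by (simp only: inv_monomial_def r_def u_def v_def)
qed

text \<open>The sums range over m, n <= N for every k; by coeffA_eq_0 only the terms with
  n <= m <= k contribute.\<close>

definition opT_numer :: "nat \<Rightarrow> real \<Rightarrow> nat \<Rightarrow> real \<Rightarrow> real" where
  "opT_numer N lam k w = rho w ^ (2 * k + 1) * (\<Sum>m\<le>N. \<Sum>n\<le>N. coeffA k m n * inv_monomial lam k m n w)"

lemma has_real_derivative_opT_numer_div_dF:
  assumes w: "0 < w" "w < 1" "dF lam w \<noteq> 0" and "k < N"
  shows "((\<lambda>x. opT_numer N lam k x / dF lam x) has_real_derivative opT_numer N lam (Suc k) w) (at w)"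
proof -
  have "opT_numer N lam k x / dF lam x
      = (\<Sum>m\<le>N. \<Sum>n\<le>N. coeffA k m n * (rho x ^ (2 * k + 1) * inv_monomial lam (Suc k) m n x))" for x
    unfolding opT_numer_def inv_monomial_def sum_distrib_left sum_divide_distrib
    by (intro sum.cong refl) (simp add: field_simps)
  moreover have "((\<lambda>x. \<Sum>m\<le>N. \<Sum>n\<le>N. coeffA k m n * (rho x ^ (2 * k + 1) * inv_monomial lam (Suc k) m n x))
    has_real_derivative (\<Sum>m\<le>N. \<Sum>n\<le>N. coeffA k m n * (rho w ^ (2 * Suc k + 1) *
      (((2 * real k + 1) / 2 + real m) * inv_monomial lam (Suc k) m n w
      - real m * inv_monomial lam (Suc k) (Suc m) n w
      - (real n + real k + 1) * inv_monomial lam (Suc k) (Suc m) (Suc n) w)))) (at w)"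
    by (intro DERIV_sum DERIV_cmult has_real_derivative_rho_monomial w)
  moreover have "(\<Sum>m\<le>N. \<Sum>n\<le>N. coeffA k m n * (rho w ^ (2 * Suc k + 1) *
      (((2 * real k + 1) / 2 + real m) * inv_monomial lam (Suc k) m n w
      - real m * inv_monomial lam (Suc k) (Suc m) n w
      - (real n + real k + 1) * inv_monomial lam (Suc k) (Suc m) (Suc n) w)))
    = opT_numer N lam (Suc k) w"
    unfolding opT_numer_def sum_coeffA_Suc[OF \<open>k < N\<close>, of "\<lambda>m n. inv_monomial lam (Suc k) m n w"]
      sum_distrib_left
    by (simp add: mult_ac)
  ultimately show ?thesis by simp
qed

lemma open_dF_nonzero: "open {w. 0 < w \<and> w < 1 \<and> dF lam w \<noteq> 0}"
proof -
  have "continuous_on {0<..<1} (dF lam)"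
    using has_real_derivative_dF
    by (intro continuous_at_imp_continuous_on ballI DERIV_isCont) auto
  then have "open ({0<..<1} \<inter> dF lam -` (- {0}))"
    by (rule continuous_open_preimage) auto
  also have "{0<..<1} \<inter> dF lam -` (- {0}) = {w. 0 < w \<and> w < 1 \<and> dF lam w \<noteq> 0}"
    by auto
  finally show ?thesis .
qed

lemma opT_iterate:
  assumes "k \<le> N" "0 < z" "z < 1" "dF lam z \<noteq> 0"
  shows "(opT lam t ^^ k) (\<lambda>w. complex_of_real ((1 - w) powr (-1/2))) z
       = complex_of_real (opT_numer N lam k z) / (- \<i> * complex_of_real t) ^ k"
  using assms
proof (induction k arbitrary: z)
  case 0
  have "opT_numer N lam 0 z = rho z"
    unfolding opT_numer_def sum_coeffA_0 by (simp add: inv_monomial_def)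
  then show ?case by (simp add: rho_def)
next
  case (Suc k)
  let ?S = "{w. 0 < w \<and> w < 1 \<and> dF lam w \<noteq> 0}"
  let ?g = "(opT lam t ^^ k) (\<lambda>w. complex_of_real ((1 - w) powr (-1/2)))"
  let ?c = "- \<i> * complex_of_real t"
  have eq: "complex_of_real (opT_numer N lam k x / dF lam x) / ?c ^ Suc k
      = - ?g x / (\<i> * complex_of_real t * complex_of_real (deriv (F lam) x))" if "x \<in> ?S" for x
    using that Suc.IH[of x] Suc.prems(1) by (simp add: deriv_F field_simps)
  have "((\<lambda>x. complex_of_real (opT_numer N lam k x / dF lam x) / ?c ^ Suc k)
      has_vector_derivative complex_of_real (opT_numer N lam (Suc k) z) / ?c ^ Suc k) (at z)"
    using Suc.prems
    by (intro has_vector_derivative_divide has_vector_derivative_of_real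
        has_real_derivative_opT_numer_div_dF) auto
  then have "((\<lambda>x. - ?g x / (\<i> * complex_of_real t * complex_of_real (deriv (F lam) x)))
      has_vector_derivative complex_of_real (opT_numer N lam (Suc k) z) / ?c ^ Suc k) (at z)"
    by (rule has_vector_derivative_transform_within_open[OF _ open_dF_nonzero _ eq])
      (use Suc.prems in simp)
  then show ?case
    unfolding funpow.simps comp_def opT_def by (rule vector_derivative_at)
qed

lemma opT_numer_eq:
  assumes "w < 1"
  shows "opT_numer N lam k w = (1 - w) powr (- (2 * real k + 1) / 2) / dF lam w ^ k
    * (\<Sum>m\<le>N. \<Sum>n\<le>N. coeffA k m n * w powi (- int m) * dF lam w powi (- int n))"
proof -
  have "rho w ^ (2 * k + 1) = (1 - w) powr (- real (2 * k + 1) / 2)"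
    using assms by (rule rho_power)
  also have "- real (2 * k + 1) / 2 = - (2 * real k + 1) / 2"
    by simp
  finally have rho_eq: "rho w ^ (2 * k + 1) = (1 - w) powr (- (2 * real k + 1) / 2)" .
  have monomial_eq:
    "inv_monomial lam k m n w = w powi (- int m) * dF lam w powi (- int n) / dF lam w ^ k" for m n
    unfolding inv_monomial_def by (simp add: power_int_minus power_add power_inverse field_simps)
  have "opT_numer N lam k w = (1 - w) powr (- (2 * real k + 1) / 2)
      * ((\<Sum>m\<le>N. \<Sum>n\<le>N. coeffA k m n * (w powi (- int m) * dF lam w powi (- int n))) / dF lam w ^ k)"
    unfolding opT_numer_def rho_eq monomial_eq
    by (simp only: times_divide_eq_right sum_divide_distrib)
  then show ?thesis
    by (simp add: mult.assoc)
qed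

lemma opT_iterate_closed_form:
  assumes "k \<le> N" "0 < z" "z < 1" "dF lam z \<noteq> 0"
  shows "(opT lam t ^^ k) (\<lambda>w. complex_of_real ((1 - w) powr (-1/2))) z =
    complex_of_real ((1 - z) powr (- (2 * real k + 1) / 2))
    / ((- \<i> * complex_of_real t) ^ k * complex_of_real (dF lam z) ^ k)
    * (\<Sum>m\<le>N. \<Sum>n\<le>N. complex_of_real (coeffA k m n * z powi (- int m) * dF lam z powi (- int n)))"
  using opT_iterate[OF assms] opT_numer_eq[OF assms(3)] assms(4) by (simp add: field_simps)

theorem lemma4p6:
  fixes N :: nat
  assumes "N \<ge> 1"
  shows "\<exists>A :: nat \<Rightarrow> nat \<Rightarrow> real.
    (\<forall>m\<le>N. \<forall>n\<le>N. dyadic (A m n)) \<and>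
    (\<forall>m\<le>N. \<forall>n\<le>N. \<bar>A m n\<bar> < fact (3 * N)) \<and>
    (\<forall>m<N. A m N = 0) \<and>
    A N N = (-1) ^ N * real (oddfact N) \<and>
    (\<forall>lam t z. lam > 0 \<longrightarrow> t > 0 \<longrightarrow> 0 < z \<longrightarrow> z < 1 \<longrightarrow> deriv (F lam) z \<noteq> 0 \<longrightarrow>
       (opT lam t ^^ N) (\<lambda>w. complex_of_real ((1 - w) powr (-1/2))) z =
         complex_of_real ((1 - z) powr (- (2 * real N + 1) / 2))
         / ((- \<i> * complex_of_real t) ^ N * complex_of_real (deriv (F lam) z) ^ N)
         * (\<Sum>m\<le>N. \<Sum>n\<le>N. complex_of_real
              (A m n * z powi (- int m) * deriv (F lam) z powi (- int n))))"
proof -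
  have "fact (3 * N) / 3 ^ N < (fact (3 * N) :: real)"
    using assms by (simp add: divide_less_eq)
  then have "\<bar>coeffA N m n\<bar> < fact (3 * N)" for m n
    by (rule le_less_trans[OF abs_coeffA_le])
  moreover have "dyadic (coeffA N m n)" for m n
    using coeffA_dyadic unfolding dyadic_def by blast
  moreover note opT_iterate_closed_form[of N N]
  ultimately show ?thesis
    by (intro exI[of _ "coeffA N"]) (auto simp: coeffA_eq_0 coeffA_diag deriv_F)
qed

end
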